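(* Let $E_1 := \{x\in\mathbb{R}^4 : x_1^2+x_2^2+x_3^2 \le x_4^2,\ x_4\ge0\}$, $E_2 := \{\lambda(-1,-1,0,-1) : \lambda\ge0\}$, $E_3 := \{\lambda(-1,1,0,-1):\lambda\ge0\}$ and $E := E_1\cup E_2\cup E_3$. Then $E$ is closed, $\lambda E\subseteq E$ for all $\lambda\ge0$, $E\cap(-E)=\{0\}$, and $\operatorname{conv}(E) = E_1+E_2+E_3$ is not closed; specifically $(0,0,1,0)$ lies in the closure of $\operatorname{conv}(E)$ but not in $\operatorname{conv}(E)$.
   Context: $\operatorname{conv}(E)$ denotes the convex hull of $E$. *)

theory Defs
  imports "HOL-Analysis.Analysis"
begin

definition E1 :: "(real^4) set" where
  "E1 = {x. (x$1)^2 + (x$2)^2 + (x$3)^2 \<le> (x$4)^2 \<and> x$4 \<ge> 0}"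

definition E2 :: "(real^4) set" where
  "E2 = {l *\<^sub>R (vector [-1, -1, 0, -1]) | l. l \<ge> 0}"

definition E3 :: "(real^4) set" where
  "E3 = {l *\<^sub>R (vector [-1, 1, 0, -1]) | l. l \<ge> 0}"

definition E :: "(real^4) set" where
  "E = E1 \<union> E2 \<union> E3"

end

theory Submission
  imports Defs
begin

text \<open>All three pieces of \<open>E\<close> are convex cones, and the convex hull of a union of convex cones
is their Minkowski sum. In that sum the two rays, whose first coordinates and heights are equal and
negative, can cancel the first coordinate and almost all the height of an ice-cream cone point
\<open>(2l, 0, 1, 2l + d)\<close> with \<open>4 l d = 1\<close>, giving \<open>(0, 0, 1, d)\<close> for every \<open>d > 0\<close>.
For \<open>d = 0\<close> the cone summand would have to be \<open>(l + m, l - m, 1, l + m)\<close>, which violates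
\<open>x\<^sub>1\<^sup>2 + x\<^sub>2\<^sup>2 + x\<^sub>3\<^sup>2 \<le> x\<^sub>4\<^sup>2\<close>.\<close>

lemma convex_hull_eq_convex_cone_hull:
  assumes "conic S" "S \<noteq> {}"
  shows "convex hull S = convex_cone hull S"
proof -
  have "conic (convex hull S)"
    using cone_convex_hull[of S] assms(1) by (simp add: conic_def cone_def)
  then show ?thesis
    using assms(2) by (metis convex_cone_hull_separate_nonempty conic_hull_eq)
qed

lemma convex_hull_Un3_convex_cones:
  assumes "convex_cone A" "convex_cone B" "convex_cone C"
  shows "convex hull (A \<union> B \<union> C) = {a + b + c | a b c. a \<in> A \<and> b \<in> B \<and> c \<in> C}"
proof -
  have "conic (A \<union> B \<union> C)"
    using assms by (auto simp: convex_cone_def conic_def)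
  moreover have "A \<union> B \<union> C \<noteq> {}"
    using assms by (simp add: convex_cone_def)
  ultimately have "convex hull (A \<union> B \<union> C) = convex_cone hull (A \<union> B \<union> C)"
    by (rule convex_hull_eq_convex_cone_hull)
  also have "\<dots> = {a + b + c | a b c. a \<in> A \<and> b \<in> B \<and> c \<in> C}"
    using assms by (auto simp: convex_cone_hull_Un hull_same)
  finally show ?thesis .
qed

lemma convex_cone_norm_le_linear:
  assumes "linear f" "linear g"
  shows "convex_cone {x. norm (f x) \<le> g x}"
proof -
  have "f 0 = 0" "g 0 = 0"
    using assms by (simp_all add: linear_0)
  moreover have "norm (f (x + y)) \<le> g (x + y)"
    if "norm (f x) \<le> g x" "norm (f y) \<le> g y" for x y
    using that assms norm_triangle_ineq[of "f x" "f y"] by (simp add: linear_add)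
  moreover have "norm (f (c *\<^sub>R x)) \<le> g (c *\<^sub>R x)"
    if "norm (f x) \<le> g x" "0 \<le> c" for x and c :: real
    using that assms by (simp add: linear_scale mult_left_mono)
  ultimately show ?thesis
    unfolding convex_cone_iff by auto
qed

lemma ray_eq_conic_hull: "{l *\<^sub>R v | l. l \<ge> 0} = conic hull {v}"
  by (auto simp: conic_hull_explicit)

lemma convex_cone_ray: "convex_cone {l *\<^sub>R v | l. l \<ge> 0}"
  unfolding ray_eq_conic_hull convex_cone_def
  by (simp add: conic_conic_hull convex_conic_hull conic_hull_eq_empty)

lemma closed_ray:
  fixes v :: "'a::euclidean_space"
  shows "closed {l *\<^sub>R v | l. l \<ge> 0}"
  unfolding ray_eq_conic_hull by (simp add: closed_conic_hull_strong polytope_sing)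

lemma vector_4 [simp]:
  "(vector [a, b, c, d] :: 'a::zero^4) $ 1 = a"
  "(vector [a, b, c, d] :: 'a^4) $ 2 = b"
  "(vector [a, b, c, d] :: 'a^4) $ 3 = c"
  "(vector [a, b, c, d] :: 'a^4) $ 4 = d"
  unfolding vector_def by simp_all

lemma E1_eq_norm_le: "E1 = {x. norm (vector [x$1, x$2, x$3] :: real^3) \<le> x$4}"
proof -
  have "sqrt s \<le> t \<longleftrightarrow> s \<le> t\<^sup>2 \<and> 0 \<le> t" if "0 \<le> s" for s t :: real
    using that by (smt (verit) real_sqrt_ge_0_iff real_sqrt_le_iff')
  then show ?thesis
    unfolding E1_def norm_vec_def L2_set_def sum_3 by (auto simp: power2_eq_square)
qed

lemma convex_cone_E1: "convex_cone E1"
proof -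
  have "linear (\<lambda>x::real^4. vector [x$1, x$2, x$3] :: real^3)"
    by (rule linearI) (simp_all add: vec_eq_iff forall_3)
  moreover have "linear (\<lambda>x::real^4. x$4)"
    by (rule bounded_linear.linear[OF bounded_linear_vec_nth])
  ultimately show ?thesis
    unfolding E1_eq_norm_le by (rule convex_cone_norm_le_linear)
qed

lemma closed_E: "closed E"
proof -
  have "closed E1"
    unfolding E1_def by (intro closed_Collect_conj closed_Collect_le continuous_intros)
  then show ?thesis
    unfolding E_def E2_def E3_def by (intro closed_Un closed_ray)
qed

lemma conic_E: "conic E"
  using convex_cone_E1 convex_cone_ray
  unfolding E_def E2_def E3_def convex_cone_def conic_def by blast

lemma E_pointed: "E \<inter> uminus ` E = {0}"
proof -
  have "x = 0" if "x \<in> E" "- x \<in> E" for x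
    using that unfolding E_def E1_def E2_def E3_def
    by (auto simp: vec_eq_iff forall_4; smt (verit) zero_le_power2 power2_minus zero_eq_power2)
  moreover have "0 \<in> E"
    using conic_E unfolding E_def E2_def by auto
  ultimately show ?thesis
    by force
qed

lemma convex_hull_E: "convex hull E = {a + b + c | a b c. a \<in> E1 \<and> b \<in> E2 \<and> c \<in> E3}"
  unfolding E_def using convex_cone_E1
  by (simp add: E2_def E3_def convex_hull_Un3_convex_cones convex_cone_ray)

lemma lifted_point_in_convex_hull_E:
  assumes "d > 0"
  shows "(vector [0, 0, 1, d] :: real^4) \<in> convex hull E"
proof -
  define l where "l = 1 / (4 * d)"
  have l: "l \<ge> 0" "4 * l * d = 1"
    using assms by (simp_all add: l_def)
  have "vector [2 * l, 0, 1, 2 * l + d] \<in> E1"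
    using l assms by (simp add: E1_def power2_eq_square algebra_simps)
  moreover have "l *\<^sub>R vector [-1, -1, 0, -1] \<in> E2" "l *\<^sub>R vector [-1, 1, 0, -1] \<in> E3"
    using l by (auto simp: E2_def E3_def)
  moreover have "(vector [0, 0, 1, d] :: real^4) =
      vector [2 * l, 0, 1, 2 * l + d] + l *\<^sub>R vector [-1, -1, 0, -1] + l *\<^sub>R vector [-1, 1, 0, -1]"
    by (simp add: vec_eq_iff forall_4)
  ultimately show ?thesis
    unfolding convex_hull_E by blast
qed

lemma point_notin_convex_hull_E: "(vector [0, 0, 1, 0] :: real^4) \<notin> convex hull E"
proof
  assume "(vector [0, 0, 1, 0] :: real^4) \<in> convex hull E"
  then obtain a l m where a: "a \<in> E1" and l: "l \<ge> 0" and m: "m \<ge> 0" and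
    sum: "vector [0, 0, 1, 0] = a + l *\<^sub>R vector [-1, -1, 0, -1] + m *\<^sub>R vector [-1, 1, 0, -1]"
    unfolding convex_hull_E E2_def E3_def by blast
  from sum have "a = vector [l + m, l - m, 1, l + m]"
    by (simp add: vec_eq_iff forall_4)
  with a have "(l + m)\<^sup>2 + (l - m)\<^sup>2 + 1 \<le> (l + m)\<^sup>2"
    by (simp add: E1_def)
  then show False
    by (smt (verit) zero_le_power2)
qed

lemma point_in_closure_convex_hull_E:
  "(vector [0, 0, 1, 0] :: real^4) \<in> closure (convex hull E)"
  unfolding closure_approachable
proof (intro allI impI)
  fix e :: real assume "e > 0"
  have "dist (vector [0, 0, 1, e / 2]) (vector [0, 0, 1, 0] :: real^4) = e / 2"
    using \<open>e > 0\<close> by (simp add: dist_norm norm_vec_def L2_set_def sum_4)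
  then show "\<exists>y \<in> convex hull E. dist y (vector [0, 0, 1, 0]) < e"
    using \<open>e > 0\<close> lifted_point_in_convex_hull_E[of "e / 2"] by force
qed

theorem mainTheorem11:
  shows "closed E
    \<and> (\<forall>l::real. l \<ge> 0 \<longrightarrow> (\<lambda>x. l *\<^sub>R x) ` E \<subseteq> E)
    \<and> E \<inter> uminus ` E = {0}
    \<and> convex hull E = {a + b + c | a b c. a \<in> E1 \<and> b \<in> E2 \<and> c \<in> E3}
    \<and> \<not> closed (convex hull E)
    \<and> (vector [0, 0, 1, 0] :: real^4) \<in> closure (convex hull E)
    \<and> (vector [0, 0, 1, 0] :: real^4) \<notin> convex hull E"
  using closed_E conic_E E_pointed convex_hull_E
    point_in_closure_convex_hull_E point_notin_convex_hull_E
  by (auto simp: conic_def closure_closed)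

end
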